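(* For each positive integer $k$, let $z_k$ be the optimal value of the program \[ \max \frac{\sum_{j=1}^k \alpha_j}{f+\sum_{j=1}^k d_j}\ \text{ s.t. } \alpha_j\le\alpha_{j+1}\ (1\le j<k);\ \sqrt{\alpha_j}\le\sqrt{\alpha_l}+\sqrt{d_j}+\sqrt{d_l}\ (1\le j,l\le k);\ \sum_{l=j}^k\max(\alpha_j-d_l,0)\le f\ (1\le j\le k);\ \alpha_j,d_j,f\ge0. \] Then $\sup_{k \ge 1} z_k \ge 2.86$.
   Context: The maximum is taken over feasible points with $f+\sum_j d_j>0$. *)

theory Defs
  imports Complex_Main "HOL-Library.Extended_Real"
begin

definition feasible :: "nat \<Rightarrow> (nat \<Rightarrow> real) \<Rightarrow> (nat \<Rightarrow> real) \<Rightarrow> real \<Rightarrow> bool" where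
  "feasible k \<alpha> d f \<longleftrightarrow>
     (\<forall>j. 1 \<le> j \<and> j < k \<longrightarrow> \<alpha> j \<le> \<alpha> (j + 1)) \<and>
     (\<forall>j\<in>{1..k}. \<forall>l\<in>{1..k}. sqrt (\<alpha> j) \<le> sqrt (\<alpha> l) + sqrt (d j) + sqrt (d l)) \<and>
     (\<forall>j\<in>{1..k}. (\<Sum>l=j..k. max (\<alpha> j - d l) 0) \<le> f) \<and>
     (\<forall>j\<in>{1..k}. 0 \<le> \<alpha> j \<and> 0 \<le> d j) \<and> 0 \<le> f"

definition zval :: "nat \<Rightarrow> ereal" where
  "zval k = (SUP p \<in> {(\<alpha>, d, f). feasible k \<alpha> d f \<and> f + (\<Sum>j=1..k. d j) > 0}.
      ereal ((\<Sum>j=1..k. fst p j) / (snd (snd p) + (\<Sum>j=1..k. fst (snd p) j))))"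

end

theory Submission
  imports Defs
begin

text \<open>
  For a nondecreasing list \<open>u\<^sub>1 \<le> \<dots> \<le> u\<^sub>k\<close> with \<open>s \<le> 2 u\<^sub>1\<close> put \<open>\<alpha>\<^sub>j = u\<^sub>j\<^sup>2\<close> and \<open>d\<^sub>j = (u\<^sub>j - s)\<^sup>2\<close>.
  The square-root constraints then read \<open>|u\<^sub>j| \<le> |u\<^sub>l| + |u\<^sub>j - s| + |u\<^sub>l - s|\<close>, an
  instance of the triangle inequality. In the \<open>j\<close>-th capacity constraint the term of
  \<open>l \<ge> j\<close> is positive exactly when \<open>u\<^sub>l \<le> u\<^sub>j + s\<close> (as \<open>u\<^sub>l \<ge> u\<^sub>j \<ge> s - u\<^sub>j\<close>); since \<open>u\<close> is
  sorted these \<open>l\<close> form a window \<open>j..p\<^sub>j\<close> whose right end moves monotonically with \<open>j\<close>,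
  so all \<open>k\<close> constraints are checked in linear time by sliding the window. An
  approximate optimum of the program for \<open>k = 748\<close>, rounded to integers with \<open>s = 10\<^sup>4\<close>
  and \<open>f = 20003836249\<close>, passes this check and has objective value \<open>2.8610\<dots>\<close>.
\<close>

lemma max_square_diff_eq:
  fixes x y :: "'a::linordered_idom"
  assumes "0 \<le> x"
  shows "max (x\<^sup>2 - y\<^sup>2) 0 = (if \<bar>y\<bar> \<le> x then x\<^sup>2 - y\<^sup>2 else 0)"
  using abs_le_square_iff[of y x] assms by auto

fun capacity_bounded :: "'a::linordered_idom \<Rightarrow> 'a \<Rightarrow> 'a list \<Rightarrow> bool" where
  "capacity_bounded s f [] = True"
| "capacity_bounded s f (x # xs) =
     ((\<Sum>y\<leftarrow>x # xs. max (x\<^sup>2 - (y - s)\<^sup>2) 0) \<le> f \<and> capacity_bounded s f xs)"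

lemma capacity_bounded_iff_nth:
  "capacity_bounded s f xs \<longleftrightarrow>
     (\<forall>i<length xs. (\<Sum>y\<leftarrow>drop i xs. max ((xs ! i)\<^sup>2 - (y - s)\<^sup>2) 0) \<le> f)"
proof (induction xs)
  case (Cons x xs)
  then show ?case by (auto simp: All_less_Suc2)
qed simp

lemma sum_nth_eq_sum_list_drop:
  "(\<Sum>l=Suc m..length xs. g (xs ! (l - 1))) = (\<Sum>y\<leftarrow>drop m xs. g y)"
proof -
  have "(\<Sum>l=Suc m..length xs. g (xs ! (l - 1))) = (\<Sum>i=m..<length xs. g (xs ! i))"
    unfolding atLeastLessThanSuc_atLeastAtMost[symmetric] sum.atLeast_Suc_lessThan_Suc_shift
    by simp
  also have "\<dots> = (\<Sum>i=0..<length xs - m. g (xs ! (m + i)))"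
    by (simp add: sum.atLeastLessThan_shift_0[of _ m])
  also have "\<dots> = (\<Sum>y\<leftarrow>drop m xs. g y)"
    by (simp add: sum_list_sum_nth)
  finally show ?thesis .
qed

lemma sum_list_max_square_diff_split:
  fixes x s :: "'a::linordered_idom"
  assumes "0 \<le> x" "\<forall>y\<in>set win. \<bar>y - s\<bar> \<le> x" "\<forall>y\<in>set rest. x < \<bar>y - s\<bar>"
  shows "(\<Sum>y\<leftarrow>win @ rest. max (x\<^sup>2 - (y - s)\<^sup>2) 0) = of_nat (length win) * x\<^sup>2 - (\<Sum>y\<leftarrow>win. (y - s)\<^sup>2)"
proof -
  have "(\<Sum>y\<leftarrow>win. max (x\<^sup>2 - (y - s)\<^sup>2) 0) = (\<Sum>y\<leftarrow>win. x\<^sup>2 - (y - s)\<^sup>2)"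
    using assms(1,2) by (intro arg_cong[where f = sum_list] map_cong) (auto simp: max_square_diff_eq)
  moreover have "(\<Sum>y\<leftarrow>rest. max (x\<^sup>2 - (y - s)\<^sup>2) 0) = (\<Sum>y\<leftarrow>rest. 0)"
    using assms(1,3) by (intro arg_cong[where f = sum_list] map_cong) (auto simp: max_square_diff_eq)
  ultimately show ?thesis by (simp add: sum_list_subtractf sum_list_triv)
qed

lemma capacity_bounded_ConsI:
  fixes s :: "'a::linordered_idom"
  assumes split: "x # xs = win @ rest" and sorted: "sorted (x # xs)"
    and s: "0 \<le> s" "s \<le> 2 * x"
    and win: "\<forall>y\<in>set win. y \<le> x + s" and rest: "\<forall>y\<in>set rest. x + s < y"
    and bound: "of_nat (length win) * x\<^sup>2 - (\<Sum>y\<leftarrow>win. (y - s)\<^sup>2) \<le> f"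
    and "capacity_bounded s f xs"
  shows "capacity_bounded s f (x # xs)"
proof -
  have "x \<le> y" if "y \<in> set (win @ rest)" for y
    using that split sorted by (metis set_ConsD sorted_simps(2) order_refl)
  then have "\<forall>y\<in>set win. \<bar>y - s\<bar> \<le> x" "\<forall>y\<in>set rest. x < \<bar>y - s\<bar>"
    using s win rest by force+
  moreover have "0 \<le> x"
    using s by simp
  ultimately have "(\<Sum>y\<leftarrow>x # xs. max (x\<^sup>2 - (y - s)\<^sup>2) 0) = of_nat (length win) * x\<^sup>2 - (\<Sum>y\<leftarrow>win. (y - s)\<^sup>2)"
    unfolding split by (intro sum_list_max_square_diff_split)
  then show ?thesis
    using bound \<open>capacity_bounded s f xs\<close> by simp
qed

text \<open>
  \<open>window_check s f xs ys c w\<close> scans the suffix \<open>xs\<close> starting at the current index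
  \<open>j\<close>; the window is the prefix of \<open>xs\<close> in front of \<open>ys\<close>, of length \<open>c\<close> and with
  \<open>w = \<Sum>(y - s)\<^sup>2\<close> over it. The window is extended while the next entry is at most
  \<open>x + s\<close>; then the constraint of \<open>x\<close> is \<open>c x\<^sup>2 - w \<le> f\<close> and \<open>x\<close> leaves the window.
\<close>

fun window_check :: "'a::linordered_idom \<Rightarrow> 'a \<Rightarrow> 'a list \<Rightarrow> 'a list \<Rightarrow> 'a \<Rightarrow> 'a \<Rightarrow> bool" where
  "window_check s f [] ys c w = True"
| "window_check s f (x # xs) (y # ys) c w =
     (if y \<le> x + s then window_check s f (x # xs) ys (c + 1) (w + (y - s)\<^sup>2)
      else c * x\<^sup>2 - w \<le> f \<and> window_check s f xs (y # ys) (c - 1) (w - (x - s)\<^sup>2))"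
| "window_check s f (x # xs) [] c w =
     (c * x\<^sup>2 - w \<le> f \<and> window_check s f xs [] (c - 1) (w - (x - s)\<^sup>2))"

text \<open>
  Evaluating \<open>window_check\<close> on a concrete list by the simplifier is only fast if the
  list arguments are never resimplified; this congruence rule freezes them.
\<close>

lemma window_check_cong:
  "s = s' \<Longrightarrow> f = f' \<Longrightarrow> c = c' \<Longrightarrow> w = w' \<Longrightarrow>
    window_check s f xs ys c w = window_check s' f' xs ys c' w'"
  by simp

lemma window_check_sound:
  fixes s :: "'a::linordered_idom"
  assumes "window_check s f xs ys c w" "xs = win @ ys" "c = of_nat (length win)"
    and "w = (\<Sum>y\<leftarrow>win. (y - s)\<^sup>2)" "sorted xs" "0 \<le> s" "\<forall>x\<in>set xs. s \<le> 2 * x"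
    and "\<forall>y\<in>set win. y \<le> hd xs + s"
  shows "capacity_bounded s f xs"
  using assms
proof (induction s f xs ys c w arbitrary: win rule: window_check.induct)
  case (1 s f ys c w)
  then show ?case by simp
next
  case (2 s f x xs y ys c w)
  show ?case
  proof (cases "y \<le> x + s")
    case True
    with "2.prems"(1) have "window_check s f (x # xs) ys (c + 1) (w + (y - s)\<^sup>2)"
      by simp
    then show ?thesis
    proof (rule "2.IH"(1)[OF True])
      show "x # xs = (win @ [y]) @ ys" "c + 1 = of_nat (length (win @ [y]))"
        "w + (y - s)\<^sup>2 = (\<Sum>z\<leftarrow>win @ [y]. (z - s)\<^sup>2)"
        using "2.prems"(2-4) by simp_all
      show "\<forall>z\<in>set (win @ [y]). z \<le> hd (x # xs) + s"
        using "2.prems"(8) True by simp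
    qed (use "2.prems" in auto)
  next
    case False
    with "2.prems"(2,3,6) obtain win' where win: "win = x # win'"
      by (cases win) (auto simp: not_le)
    from "2.prems"(1) False
    have "window_check s f xs (y # ys) (c - 1) (w - (x - s)\<^sup>2)"
      by simp
    then have "capacity_bounded s f xs"
    proof (rule "2.IH"(2)[OF False])
      show "xs = win' @ y # ys" "c - 1 = of_nat (length win')"
        "w - (x - s)\<^sup>2 = (\<Sum>z\<leftarrow>win'. (z - s)\<^sup>2)"
        using "2.prems"(2-4) win by simp_all
      show "\<forall>z\<in>set win'. z \<le> hd xs + s"
        using "2.prems"(2,5,8) win by (cases win') auto
    qed (use "2.prems"(5-7) in auto)
    moreover have "\<forall>z\<in>set (y # ys). x + s < z"
      using False "2.prems"(2,5) win by (auto simp: sorted_append)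
    ultimately show ?thesis
      using capacity_bounded_ConsI[of x xs win "y # ys" s f] False "2.prems" win by auto
  qed
next
  case (3 s f x xs c w)
  then obtain win' where win: "win = x # win'"
    by (cases win) auto
  from "3.prems"(1)
  have "window_check s f xs [] (c - 1) (w - (x - s)\<^sup>2)"
    by simp
  then have "capacity_bounded s f xs"
  proof (rule "3.IH")
    show "xs = win' @ []" "c - 1 = of_nat (length win')"
      "w - (x - s)\<^sup>2 = (\<Sum>z\<leftarrow>win'. (z - s)\<^sup>2)"
      using "3.prems"(2-4) win by simp_all
    show "\<forall>z\<in>set win'. z \<le> hd xs + s"
      using "3.prems"(2,5,8) win by (cases win') auto
  qed (use "3.prems"(5-7) in auto)
  then show ?case
    using capacity_bounded_ConsI[of x xs win "[]" s f] "3.prems" win by auto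
qed

lemma capacity_bounded_of_window_check:
  fixes s :: "'a::linordered_idom"
  assumes "window_check s f xs xs 0 0" "sorted xs" "0 \<le> s" "s \<le> 2 * hd xs"
  shows "capacity_bounded s f xs"
proof (cases xs)
  case (Cons x ys)
  have "s \<le> 2 * z" if "z \<in> set xs" for z
  proof -
    have "x \<le> z"
      using that assms(2) Cons by auto
    then show ?thesis
      using assms(4) Cons by simp
  qed
  then show ?thesis
    using window_check_sound[of s f xs xs 0 0 "[]"] assms(1-3) by simp
qed simp

lemma feasible_of_window_check:
  fixes us :: "real list"
  assumes "window_check s f us us 0 0" "sorted us" "0 \<le> s" "s \<le> 2 * hd us" "0 \<le> f"
  shows "feasible (length us) (\<lambda>j. (us ! (j - 1))\<^sup>2) (\<lambda>j. (us ! (j - 1) - s)\<^sup>2) f"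
  unfolding feasible_def
proof (intro conjI ballI allI impI)
  have nonneg: "0 \<le> us ! i" if "i < length us" for i
  proof -
    have "hd us \<le> us ! i"
      using that sorted_nth_mono[OF assms(2), of 0 i] by (cases us) auto
    then show ?thesis
      using assms(3,4) by linarith
  qed
  fix j
  assume j: "1 \<le> j \<and> j < length us"
  then have "0 \<le> us ! (j - 1)" "us ! (j - 1) \<le> us ! j"
    using nonneg[of "j - 1"] sorted_nth_mono[OF assms(2), of "j - 1" j] by auto
  then show "(us ! (j - 1))\<^sup>2 \<le> (us ! (j + 1 - 1))\<^sup>2"
    by (simp add: power_mono)
next
  fix j l
  show "sqrt ((us ! (j - 1))\<^sup>2) \<le> sqrt ((us ! (l - 1))\<^sup>2) + sqrt ((us ! (j - 1) - s)\<^sup>2) + sqrt ((us ! (l - 1) - s)\<^sup>2)"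
    by simp
next
  fix j
  assume "j \<in> {1..length us}"
  then obtain m where m: "j = Suc m" "m < length us"
    by (cases j) auto
  have "(\<Sum>l=j..length us. max ((us ! (j - 1))\<^sup>2 - (us ! (l - 1) - s)\<^sup>2) 0)
      = (\<Sum>y\<leftarrow>drop m us. max ((us ! m)\<^sup>2 - (y - s)\<^sup>2) 0)"
    using sum_nth_eq_sum_list_drop[where m = m and xs = us] m(1) by simp
  also have "\<dots> \<le> f"
    using capacity_bounded_of_window_check[OF assms(1-4)] m(2) by (simp add: capacity_bounded_iff_nth)
  finally show "(\<Sum>l=j..length us. max ((us ! (j - 1))\<^sup>2 - (us ! (l - 1) - s)\<^sup>2) 0) \<le> f" .
qed (use assms(5) in simp_all)

lemma ratio_le_zval:
  assumes "feasible k \<alpha> d f" "0 < f + (\<Sum>j=1..k. d j)"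
  shows "ereal ((\<Sum>j=1..k. \<alpha> j) / (f + (\<Sum>j=1..k. d j))) \<le> zval k"
  unfolding zval_def by (rule SUP_upper2[where i = "(\<alpha>, d, f)"]) (use assms in auto)

lemma zval_ge_of_window_check:
  fixes us :: "real list"
  assumes "window_check s f us us 0 0" "sorted us" "0 \<le> s" "s \<le> 2 * hd us" "0 < f"
  shows "ereal ((\<Sum>u\<leftarrow>us. u\<^sup>2) / (f + (\<Sum>u\<leftarrow>us. (u - s)\<^sup>2))) \<le> zval (length us)"
proof -
  have sums: "(\<Sum>j=1..length us. (us ! (j - 1))\<^sup>2) = (\<Sum>u\<leftarrow>us. u\<^sup>2)"
    "(\<Sum>j=1..length us. (us ! (j - 1) - s)\<^sup>2) = (\<Sum>u\<leftarrow>us. (u - s)\<^sup>2)"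
    using sum_nth_eq_sum_list_drop[where m = 0 and xs = us] by simp_all
  have "0 < f + (\<Sum>j=1..length us. (us ! (j - 1) - s)\<^sup>2)"
    unfolding sums using assms(5) by (intro add_pos_nonneg sum_list_nonneg) auto
  with feasible_of_window_check[OF assms(1-4) less_imp_le[OF assms(5)]] show ?thesis
    unfolding sums[symmetric] by (rule ratio_le_zval)
qed

definition witness :: "real list" where
  "witness = [
    6286, 6289, 6292, 6296, 6299, 6302, 6306, 6309, 6312, 6316, 6319, 6322,
    6326, 6329, 6333, 6336, 6339, 6343, 6346, 6350, 6353, 6357, 6360, 6364,
    6367, 6371, 6374, 6378, 6381, 6385, 6389, 6392, 6396, 6400, 6403, 6407,
    6411, 6414, 6418, 6422, 6425, 6429, 6433, 6437, 6441, 6444, 6448, 6452,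
    6456, 6460, 6464, 6468, 6471, 6475, 6479, 6483, 6487, 6491, 6495, 6499,
    6503, 6507, 6511, 6515, 6519, 6524, 6528, 6532, 6536, 6540, 6544, 6548,
    6553, 6557, 6561, 6565, 6570, 6574, 6578, 6583, 6587, 6591, 6596, 6600,
    6604, 6609, 6613, 6618, 6622, 6627, 6631, 6636, 6640, 6645, 6649, 6654,
    6659, 6663, 6668, 6672, 6677, 6682, 6687, 6691, 6696, 6701, 6706, 6710,
    6715, 6720, 6725, 6730, 6735, 6740, 6745, 6749, 6754, 6759, 6764, 6769,
    6775, 6780, 6785, 6790, 6795, 6800, 6805, 6810, 6816, 6821, 6826, 6831,
    6837, 6842, 6847, 6853, 6858, 6863, 6869, 6874, 6880, 6885, 6891, 6896,
    6902, 6907, 6913, 6919, 6924, 6930, 6936, 6941, 6947, 6953, 6959, 6964,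
    6970, 6976, 6982, 6988, 6994, 7000, 7006, 7012, 7018, 7024, 7030, 7036,
    7042, 7048, 7054, 7060, 7066, 7073, 7079, 7085, 7092, 7098, 7104, 7111,
    7117, 7123, 7130, 7136, 7143, 7150, 7156, 7163, 7169, 7176, 7183, 7189,
    7196, 7203, 7210, 7216, 7223, 7230, 7237, 7244, 7251, 7258, 7265, 7272,
    7279, 7286, 7293, 7301, 7308, 7315, 7322, 7330, 7337, 7344, 7352, 7359,
    7366, 7374, 7381, 7389, 7397, 7404, 7412, 7419, 7427, 7435, 7443, 7450,
    7458, 7466, 7474, 7482, 7490, 7498, 7506, 7514, 7522, 7530, 7538, 7547,
    7555, 7563, 7572, 7580, 7588, 7597, 7605, 7614, 7622, 7631, 7639, 7648,
    7657, 7665, 7674, 7683, 7692, 7701, 7710, 7719, 7728, 7737, 7746, 7755,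
    7764, 7773, 7782, 7792, 7801, 7810, 7820, 7829, 7839, 7848, 7858, 7867,
    7877, 7887, 7896, 7906, 7916, 7926, 7936, 7946, 7956, 7966, 7976, 7986,
    7996, 8006, 8017, 8027, 8037, 8048, 8058, 8069, 8079, 8090, 8101, 8111,
    8122, 8133, 8144, 8155, 8166, 8177, 8188, 8199, 8210, 8221, 8232, 8244,
    8255, 8266, 8278, 8289, 8301, 8313, 8324, 8336, 8348, 8360, 8372, 8384,
    8396, 8408, 8420, 8432, 8444, 8456, 8469, 8481, 8494, 8506, 8519, 8531,
    8544, 8557, 8570, 8583, 8595, 8608, 8622, 8635, 8648, 8661, 8674, 8688,
    8701, 8715, 8728, 8742, 8756, 8769, 8783, 8797, 8811, 8825, 8839, 8853,
    8868, 8882, 8896, 8911, 8925, 8940, 8955, 8969, 8984, 8999, 9014, 9029,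
    9044, 9059, 9074, 9090, 9105, 9121, 9136, 9152, 9168, 9183, 9199, 9215,
    9231, 9247, 9263, 9280, 9296, 9312, 9329, 9345, 9362, 9379, 9396, 9413,
    9430, 9447, 9464, 9481, 9498, 9516, 9533, 9551, 9569, 9587, 9604, 9622,
    9641, 9659, 9677, 9695, 9714, 9732, 9751, 9770, 9788, 9807, 9826, 9846,
    9865, 9884, 9903, 9923, 9943, 9962, 9982, 10002, 10022, 10042, 10063, 10083,
    10103, 10124, 10145, 10165, 10186, 10207, 10228, 10250, 10271, 10292, 10314, 10336,
    10358, 10380, 10402, 10424, 10446, 10469, 10491, 10514, 10536, 10559, 10582, 10606,
    10629, 10652, 10676, 10699, 10723, 10747, 10771, 10795, 10820, 10844, 10869, 10894,
    10918, 10943, 10969, 10994, 11015, 11035, 11055, 11075, 11095, 11115, 11136, 11156,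
    11177, 11197, 11218, 11239, 11260, 11281, 11302, 11324, 11345, 11367, 11388, 11410,
    11432, 11454, 11476, 11499, 11521, 11544, 11566, 11589, 11612, 11635, 11658, 11681,
    11705, 11728, 11752, 11776, 11800, 11824, 11848, 11872, 11897, 11922, 11946, 11971,
    11996, 12022, 12047, 12072, 12098, 12124, 12150, 12176, 12202, 12229, 12255, 12282,
    12309, 12336, 12363, 12391, 12418, 12446, 12474, 12502, 12530, 12559, 12588, 12616,
    12645, 12674, 12704, 12733, 12763, 12793, 12823, 12853, 12884, 12915, 12946, 12977,
    13008, 13040, 13071, 13103, 13135, 13168, 13200, 13233, 13266, 13300, 13333, 13367,
    13401, 13435, 13470, 13504, 13539, 13574, 13610, 13645, 13681, 13718, 13754, 13791,
    13828, 13865, 13903, 13941, 13979, 14017, 14056, 14095, 14134, 14174, 14214, 14254,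
    14294, 14335, 14376, 14418, 14460, 14502, 14544, 14587, 14630, 14674, 14718, 14762,
    14806, 14851, 14897, 14943, 14989, 15035, 15082, 15129, 15177, 15225, 15274, 15323,
    15372, 15422, 15473, 15524, 15575, 15627, 15679, 15731, 15785, 15838, 15893, 15947,
    16003, 16058, 16115, 16172, 16229, 16287, 16346, 16405, 16465, 16525, 16586, 16648,
    16710, 16773, 16837, 16901, 16967, 17032, 17099, 17166, 17234, 17303, 17372, 17443,
    17514, 17586, 17659, 17733, 17807, 17883, 17959, 18037, 18115, 18195, 18275, 18356,
    18439, 18522, 18607, 18693, 18780, 18868, 18958, 19048, 19140, 19234, 19328, 19424,
    19522, 19621, 19721, 19823, 19927, 20032, 20139, 20247, 20358, 20470, 20584, 20701,
    20819, 20939, 21000, 21000, 21000, 21000, 21000, 21000, 21000, 21000, 21000, 21000,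
    21000, 21000, 21000, 21000, 21000, 21000, 21000, 21000, 21000, 21000, 21000, 21000,
    21000, 21000, 21000, 21000, 21000, 21000, 21000, 21000, 21000, 21000, 21000, 21000,
    21000, 21000, 21000, 21000, 21000, 21000, 21000, 21000, 21000, 21000, 21000, 21000,
    21000, 21000, 21000, 21000, 21000, 21000, 21000, 21000, 21000, 21000, 21000, 21000,
    21000, 21000, 21000, 21000]"

lemma witness_window_check: "window_check 10000 20003836249 witness witness 0 0"
  unfolding witness_def by (simp cong: if_weak_cong window_check_cong)

lemma witness_sorted: "sorted witness"
proof -
  have freeze: "sorted_wrt P xs = sorted_wrt P xs" for P and xs :: "real list"
    by (rule refl)
  show ?thesis
    unfolding witness_def by (simp del: sorted_wrt.simps add: sorted1 sorted2 cong: freeze)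
qed

lemma witness_ratio:
  "2.86 \<le> (\<Sum>u\<leftarrow>witness. u\<^sup>2) / (20003836249 + (\<Sum>u\<leftarrow>witness. (u - 10000)\<^sup>2))"
proof -
  have freeze: "map g xs = map g xs" for g :: "real \<Rightarrow> real" and xs
    by (rule refl)
  show ?thesis
    unfolding witness_def by (simp cong: freeze)
qed

theorem lemma6:
  shows "(SUP k \<in> {1::nat..}. zval k) \<ge> ereal 2.86"
proof -
  have "ereal 2.86 \<le> ereal ((\<Sum>u\<leftarrow>witness. u\<^sup>2) / (20003836249 + (\<Sum>u\<leftarrow>witness. (u - 10000)\<^sup>2)))"
    using witness_ratio by simp
  also have "\<dots> \<le> zval (length witness)"
    by (rule zval_ge_of_window_check[OF witness_window_check witness_sorted])
      (simp_all add: witness_def)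
  also have "\<dots> \<le> (SUP k \<in> {1::nat..}. zval k)"
    by (rule SUP_upper) (simp add: witness_def)
  finally show ?thesis .
qed

end
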